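(* Let $X$ be a hyperbolic Riemann surface and let $X_1\subset X_2\subset\cdots$ be open subsets of $X$ with $X=\bigcup_{j=1}^\infty X_j$. Let $f_j:\Delta^*\to X_j$ be holomorphic maps and let $\{z_j\}\subset\Delta^*$ be a sequence with $z_j\to 0$ and $f_j(z_j)\to z_0$ for some $z_0\in X$. Then: \begin{enumerate} \item[(i)] for all $j$ sufficiently large, $f_j$ extends to a holomorphic map $F_j:\Delta\to X_j$; \item[(ii)] there is a subsequence $\{F_{j_k}\}$ of $\{F_j\}$ which converges uniformly on compact subsets of $\Delta$ to a holomorphic map $F:\Delta\to X$. \end{enumerate}
   Context: $\Delta=\{z\in\mathbb{C}:|z|<1\}$ and $\Delta^*=\Delta\setminus\{0\}$. A Riemann surface is a connected one-dimensional complex manifold; it is hyperbolic if its universal covering surface is $\Delta$ (equivalently, it is Kobayashi hyperbolic). Open subsets $X_j$ need not be connected in general, but the maps $f_j$ take values in them. *)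

theory Defs
  imports "HOL-Complex_Analysis.Complex_Analysis"
begin

definition is_chart :: "'a topology \<Rightarrow> 'a set \<times> ('a \<Rightarrow> complex) \<Rightarrow> bool" where
  "is_chart X c \<longleftrightarrow> openin X (fst c) \<and> open (snd c ` fst c) \<and>
     homeomorphic_map (subtopology X (fst c)) (top_of_set (snd c ` fst c)) (snd c)"

definition riemann_surface :: "'a topology \<Rightarrow> ('a set \<times> ('a \<Rightarrow> complex)) set \<Rightarrow> bool" where
  "riemann_surface X A \<longleftrightarrow>
     topspace X \<noteq> {} \<and> connected_space X \<and> Hausdorff_space X \<and>
     (\<forall>c\<in>A. is_chart X c) \<and>
     (\<Union>c\<in>A. fst c) = topspace X \<and>
     (\<forall>c\<in>A. \<forall>d\<in>A. ((snd d) \<circ> inv_into (fst c) (snd c))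
          holomorphic_on (snd c ` (fst c \<inter> fst d)))"

definition holo_map :: "complex set \<Rightarrow> 'a topology \<Rightarrow> ('a set \<times> ('a \<Rightarrow> complex)) set
    \<Rightarrow> (complex \<Rightarrow> 'a) \<Rightarrow> bool" where
  "holo_map S X A f \<longleftrightarrow> continuous_map (top_of_set S) X f \<and>
     (\<forall>d\<in>A. ((snd d) \<circ> f) holomorphic_on (S \<inter> f -` fst d))"

text \<open>Covering map from a set of the plane onto the space X (abstract-topology analogue
  of the library's covering_space).\<close>
definition covering_map_onto :: "complex set \<Rightarrow> (complex \<Rightarrow> 'a) \<Rightarrow> 'a topology \<Rightarrow> bool" where
  "covering_map_onto C p X \<longleftrightarrow>
     continuous_map (top_of_set C) X p \<and> p ` C = topspace X \<and>
     (\<forall>x\<in>topspace X. \<exists>T. x \<in> T \<and> openin X T \<and>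
        (\<exists>v. \<Union>v = C \<inter> p -` T \<and> (\<forall>u\<in>v. openin (top_of_set C) u) \<and>
             pairwise disjnt v \<and>
             (\<forall>u\<in>v. homeomorphic_map (top_of_set u) (subtopology X T) p)))"

text \<open>Hyperbolic: the universal cover is the unit disc, i.e. there is a holomorphic
  covering map from the unit disc onto X (the disc is simply connected).\<close>
definition hyperbolic_rs :: "'a topology \<Rightarrow> ('a set \<times> ('a \<Rightarrow> complex)) set \<Rightarrow> bool" where
  "hyperbolic_rs X A \<longleftrightarrow> riemann_surface X A \<and>
     (\<exists>p. holo_map (ball 0 1) X A p \<and> covering_map_onto (ball 0 1) p X)"

text \<open>Uniform convergence on compact subsets of S (compact-open convergence),
  for maps into a topological space.\<close>
definition conv_on_compacts :: "complex set \<Rightarrow> 'a topology \<Rightarrow> (nat \<Rightarrow> complex \<Rightarrow> 'a)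
    \<Rightarrow> (complex \<Rightarrow> 'a) \<Rightarrow> bool" where
  "conv_on_compacts S X G F \<longleftrightarrow>
     (\<forall>K W. compact K \<and> K \<subseteq> S \<and> openin X W \<and> F ` K \<subseteq> W \<longrightarrow>
        (\<forall>\<^sub>F k in sequentially. G k ` K \<subseteq> W))"

end

theory Submission
  imports Defs
begin

(* Let p : \<Delta> \<rightarrow> X be the universal covering. Lift f_j \<circ> exp from the left half-plane
   to g_j with g_j(log z_j) close to a fixed preimage \<zeta> of z0. The half-plane contains the
   disc of radius R_j = -log |z_j| around log z_j + \<pi>i, so by Cauchy's estimate g_j moves
   by O(1/R_j) under w \<mapsto> w + 2\<pi>i; since p is injective near \<zeta>, g_j is 2\<pi>i-periodic for
   large j. It therefore descends to a bounded map \<Delta>* \<rightarrow> \<Delta>, which extends over 0 by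
   Riemann's theorem, and F_j = p \<circ> (extension). The values of the extensions at 0 tend to
   \<zeta>, so Montel's theorem and the open mapping theorem give a subsequence converging locally
   uniformly to a holomorphic map into \<Delta>; composing with p gives the limit F. *)

lemma holo_map_compose:
  assumes psi: "holo_map S' X A psi" and h: "h holomorphic_on S" and hS: "h ` S \<subseteq> S'"
  shows "holo_map S X A (psi \<circ> h)"
  unfolding holo_map_def
proof (intro conjI ballI)
  have "continuous_map (top_of_set S) (top_of_set S') h"
    using h hS by (auto intro: holomorphic_on_imp_continuous_on)
  then show "continuous_map (top_of_set S) X (psi \<circ> h)"
    using continuous_map_compose psi by (metis holo_map_def)
next
  fix d assume d: "d \<in> A"
  have "(snd d \<circ> psi) holomorphic_on (S' \<inter> psi -` fst d)"
    using psi d by (simp add: holo_map_def)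
  moreover have "h ` (S \<inter> (psi \<circ> h) -` fst d) \<subseteq> S' \<inter> psi -` fst d"
    using hS by auto
  ultimately have "((snd d \<circ> psi) \<circ> h) holomorphic_on (S \<inter> (psi \<circ> h) -` fst d)"
    using h holomorphic_on_compose_gen holomorphic_on_subset by (metis inf_le1)
  then show "(snd d \<circ> (psi \<circ> h)) holomorphic_on (S \<inter> (psi \<circ> h) -` fst d)"
    by (simp add: o_assoc)
qed

lemma open_vimage_continuous_map:
  assumes "continuous_map (top_of_set S) X f" "open S" "openin X W"
  shows "open (S \<inter> f -` W)"
proof -
  have "openin (top_of_set S) {x \<in> S. f x \<in> W}"
    using openin_continuous_map_preimage[OF assms(1,3)] by simp
  moreover have "{x \<in> S. f x \<in> W} = S \<inter> f -` W" by auto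
  ultimately show ?thesis using assms(2) openin_open_trans by metis
qed

lemma homeomorphism_pullback_sheet:
  assumes p: "homeomorphic_map (top_of_set u) (subtopology X T) p"
    and T: "T \<subseteq> topspace X" and phi: "continuous_map (top_of_set U) X phi"
  shows "\<exists>q. homeomorphism {(w,y). w \<in> U \<inter> phi -` T \<and> y \<in> u \<and> p y = phi w} (U \<inter> phi -` T) fst q"
proof -
  obtain q where q: "homeomorphic_maps (top_of_set u) (subtopology X T) p q"
    using p homeomorphic_map_maps by blast
  have cq: "continuous_map (subtopology X T) (top_of_set u) q"
    and qp: "\<And>y. y \<in> u \<Longrightarrow> q (p y) = y" and pq: "\<And>x. x \<in> T \<Longrightarrow> p (q x) = x"
    using q T by (auto simp: homeomorphic_maps_def inf_absorb2)
  have qT: "q x \<in> u" if "x \<in> T" for x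
    using cq that T by (auto simp: continuous_map_def inf_absorb2)
  have "continuous_map (top_of_set (U \<inter> phi -` T)) (subtopology X T) phi"
    using continuous_map_from_subtopology[OF phi, of "U \<inter> phi -` T"]
    by (auto simp: continuous_map_in_subtopology subtopology_subtopology)
  then have "continuous_map (top_of_set (U \<inter> phi -` T)) (top_of_set u) (q \<circ> phi)"
    using cq continuous_map_compose by blast
  then have "continuous_on (U \<inter> phi -` T) (\<lambda>w. q (phi w))"
    by (simp add: continuous_map_in_subtopology o_def)
  then show ?thesis
    by (intro exI[of _ "\<lambda>w. (w, q (phi w))"] homeomorphismI)
       (auto simp: qT pq intro!: continuous_intros, metis qp)
qed

lemma covering_space_pullback:
  assumes cov: "covering_map_onto D p X" and phi: "continuous_map (top_of_set U) X phi"
  shows "covering_space {(w,y). w \<in> U \<and> y \<in> D \<and> p y = phi w} fst U"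
proof -
  define E where "E = {(w,y). w \<in> U \<and> y \<in> D \<and> p y = phi w}"
  have pD: "p ` D = topspace X" using cov by (simp add: covering_map_onto_def)
  have phiU: "phi w \<in> topspace X" if "w \<in> U" for w
    using phi that by (auto simp: continuous_map_def)
  have "fst ` E = U"
    using pD phiU by (force simp: E_def image_iff)
  moreover have "\<exists>T. w \<in> T \<and> openin (top_of_set U) T \<and>
                    (\<exists>v. \<Union>v = E \<inter> fst -` T \<and> (\<forall>u \<in> v. openin (top_of_set E) u) \<and>
                        pairwise disjnt v \<and> (\<forall>u \<in> v. \<exists>q. homeomorphism u T fst q))"
    if w: "w \<in> U" for w
  proof -
    obtain T v where wT: "phi w \<in> T" and T: "openin X T" and Uv: "\<Union>v = D \<inter> p -` T"
      and opv: "\<forall>u\<in>v. openin (top_of_set D) u" and dj: "pairwise disjnt v"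
      and hm: "\<forall>u\<in>v. homeomorphic_map (top_of_set u) (subtopology X T) p"
      using cov phiU[OF w] unfolding covering_map_onto_def by metis
    define U' where "U' = U \<inter> phi -` T"
    define P where "P u = {(w',y). w' \<in> U' \<and> y \<in> u \<and> p y = phi w'}" for u
    have opU': "openin (top_of_set U) U'"
      using openin_continuous_map_preimage[OF phi T] by (simp add: U'_def Int_def conj_commute)
    then obtain OU where OU: "open OU" "U' = U \<inter> OU" by (metis inf_commute openin_open)
    have "\<Union>(P ` v) = E \<inter> fst -` U'"
      using Uv by (fastforce simp: P_def E_def U'_def)
    moreover have "openin (top_of_set E) (P u)" if u: "u \<in> v" for u
    proof -
      obtain Ou where Ou: "open Ou" "u = D \<inter> Ou" using opv u by (metis inf_commute openin_open)
      have "P u = E \<inter> (OU \<times> Ou)"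
        using Ou OU by (auto simp: P_def E_def U'_def)
      then show ?thesis using Ou OU by (auto simp: openin_open intro!: open_Times)
    qed
    moreover have "pairwise disjnt (P ` v)"
      using dj by (fastforce simp: pairwise_def disjnt_def P_def)
    moreover have "\<exists>q. homeomorphism (P u) U' fst q" if "u \<in> v" for u
      using homeomorphism_pullback_sheet[OF bspec[OF hm that] openin_subset[OF T] phi]
      by (simp add: P_def U'_def)
    ultimately show ?thesis
      using opU' wT w by (intro exI[of _ U'] conjI exI[of _ "P ` v"]) (auto simp: U'_def)
  qed
  ultimately show ?thesis
    unfolding E_def[symmetric] by (intro covering_spaceI continuous_intros) auto
qed

lemma covering_map_onto_lift:
  fixes U :: "'b::real_normed_vector set"
  assumes cov: "covering_map_onto D p X" and phi: "continuous_map (top_of_set U) X phi"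
    and U: "simply_connected U" "locally path_connected U"
    and a: "a \<in> U" and b: "b \<in> D" "p b = phi a"
  obtains g where "continuous_on U g" "g ` U \<subseteq> D" "g a = b" "\<And>w. w \<in> U \<Longrightarrow> p (g w) = phi w"
proof -
  define E where "E = {(w,y). w \<in> U \<and> y \<in> D \<and> p y = phi w}"
  have "covering_space E fst U"
    unfolding E_def by (rule covering_space_pullback[OF cov phi])
  moreover have "(a, b) \<in> E" using a b by (simp add: E_def)
  ultimately obtain G where "continuous_on U G" "G \<in> U \<rightarrow> E" "G a = (a, b)"
    and "\<And>w. w \<in> U \<Longrightarrow> fst (G w) = w"
    using covering_space_lift_strong[of E fst U "(a, b)" a U id] a U by auto
  then show thesis
    by (intro that[of "snd \<circ> G"]) (force simp: E_def intro: continuous_intros)+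
qed

lemma covering_map_onto_lift_unique:
  fixes U :: "'b::real_normed_vector set"
  assumes cov: "covering_map_onto D p X" and U: "connected U"
    and g1: "continuous_on U g1" "g1 ` U \<subseteq> D" and g2: "continuous_on U g2" "g2 ` U \<subseteq> D"
    and eq: "\<And>w. w \<in> U \<Longrightarrow> p (g1 w) = p (g2 w)" and a: "a \<in> U" "g1 a = g2 a" and w: "w \<in> U"
  shows "g1 w = g2 w"
proof -
  define E where "E = {(w,y). w \<in> U \<and> y \<in> D \<and> p y = (p \<circ> g1) w}"
  have "continuous_map (top_of_set U) X (p \<circ> g1)"
    using cov g1 continuous_map_compose[of "top_of_set U" "top_of_set D" g1 X p]
    by (auto simp: covering_map_onto_def continuous_map_in_subtopology)
  then have "covering_space E fst U"
    unfolding E_def by (rule covering_space_pullback[OF cov])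
  then have "(w, g1 w) = (w, g2 w)"
    by (rule covering_space_lift_unique[where f=id and T=U and a=a and x=w
          and ?g1.0="\<lambda>w. (w, g1 w)" and ?g2.0="\<lambda>w. (w, g2 w)"])
       (use g1 g2 eq a w U in \<open>auto simp: E_def intro!: continuous_intros\<close>)
  then show ?thesis by simp
qed

lemma inj_on_chart:
  assumes "is_chart X d"
  shows "inj_on (snd d) (fst d)"
proof -
  have "homeomorphic_map (subtopology X (fst d)) (top_of_set (snd d ` fst d)) (snd d)"
    using assms by (simp add: is_chart_def)
  then have "inj_on (snd d) (topspace (subtopology X (fst d)))"
    by (rule homeomorphic_imp_injective_map)
  moreover have "fst d \<subseteq> topspace X"
    using assms openin_subset by (auto simp: is_chart_def)
  ultimately show ?thesis
    by (simp add: inf_absorb2)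
qed

lemma holo_covering_local_inverse:
  assumes rs: "riemann_surface X A" and p: "holo_map D X A p"
    and cov: "covering_map_onto D p X" and D: "open D" and \<zeta>: "\<zeta> \<in> D"
  obtains V d k where "open V" "\<zeta> \<in> V" "V \<subseteq> D \<inter> p -` fst d" "d \<in> A"
    "k holomorphic_on (snd d \<circ> p) ` V" "\<And>y. y \<in> V \<Longrightarrow> k (snd d (p y)) = y"
proof -
  have cp: "continuous_map (top_of_set D) X p" using p by (simp add: holo_map_def)
  have p\<zeta>: "p \<zeta> \<in> topspace X" using cov \<zeta> by (auto simp: covering_map_onto_def)
  obtain T v where "p \<zeta> \<in> T" and Uv: "\<Union>v = D \<inter> p -` T"
    and opv: "\<forall>u\<in>v. openin (top_of_set D) u"
    and hm: "\<forall>u\<in>v. homeomorphic_map (top_of_set u) (subtopology X T) p"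
    using cov p\<zeta> unfolding covering_map_onto_def by metis
  then obtain u where u: "u \<in> v" "\<zeta> \<in> u" using \<zeta> by blast
  have "open u" using opv u D openin_open_trans by blast
  have "inj_on p u" using hm u homeomorphic_imp_injective_map by fastforce
  have "p \<zeta> \<in> (\<Union>c\<in>A. fst c)"
    using rs p\<zeta> by (simp add: riemann_surface_def)
  then obtain d where d: "d \<in> A" "p \<zeta> \<in> fst d" by blast
  have chart: "is_chart X d" using rs d by (auto simp: riemann_surface_def)
  define V where "V = u \<inter> (D \<inter> p -` fst d)"
  have "openin X (fst d)" using chart by (simp add: is_chart_def)
  then have "open V"
    unfolding V_def using open_vimage_continuous_map[OF cp D] \<open>open u\<close> by blast
  have "(snd d \<circ> p) holomorphic_on V"
    by (rule holomorphic_on_subset[of _ "D \<inter> p -` fst d"])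
       (use p d in \<open>auto simp: holo_map_def V_def\<close>)
  moreover have "inj_on (snd d \<circ> p) V"
  proof (rule comp_inj_on)
    show "inj_on p V"
      by (rule inj_on_subset[OF \<open>inj_on p u\<close>]) (auto simp: V_def)
    show "inj_on (snd d) (p ` V)"
      by (rule inj_on_subset[OF inj_on_chart[OF chart]]) (auto simp: V_def)
  qed
  ultimately obtain k where k: "k holomorphic_on (snd d \<circ> p) ` V"
    and kp: "\<And>y. y \<in> V \<Longrightarrow> k ((snd d \<circ> p) y) = y"
    using holomorphic_has_inverse[OF _ \<open>open V\<close>] by blast
  have "\<zeta> \<in> V" using u d \<zeta> by (simp add: V_def)
  moreover have "V \<subseteq> D \<inter> p -` fst d" unfolding V_def by blast
  ultimately show thesis
    by (rule that[OF \<open>open V\<close> _ _ d(1) k]) (use kp in simp)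
qed

lemma holomorphic_lift:
  assumes rs: "riemann_surface X A" and p: "holo_map D X A p"
    and cov: "covering_map_onto D p X" and D: "open D" and S: "open S"
    and psi: "holo_map S X A psi" and g: "continuous_on S g" "g ` S \<subseteq> D"
    and lift: "\<And>w. w \<in> S \<Longrightarrow> p (g w) = psi w"
  shows "g holomorphic_on S"
proof -
  have "\<exists>e>0. g holomorphic_on ball w e" if w: "w \<in> S" for w
  proof -
    obtain V d k where V: "open V" "g w \<in> V" "V \<subseteq> D \<inter> p -` fst d" and d: "d \<in> A"
      and k: "k holomorphic_on (snd d \<circ> p) ` V" "\<And>y. y \<in> V \<Longrightarrow> k (snd d (p y)) = y"
      using holo_covering_local_inverse[OF rs p cov D] g w by blast
    define S' where "S' = S \<inter> g -` V"
    have "open S'"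
      using continuous_open_preimage[OF g(1) S V(1)] by (simp add: S'_def Int_commute)
    have "(snd d \<circ> psi) holomorphic_on S'"
      by (rule holomorphic_on_subset[of _ "S \<inter> psi -` fst d"])
         (use psi d V lift in \<open>force simp: holo_map_def S'_def\<close>)+
    moreover have "(snd d \<circ> psi) ` S' \<subseteq> (snd d \<circ> p) ` V"
    proof
      fix y assume "y \<in> (snd d \<circ> psi) ` S'"
      then obtain x where "x \<in> S'" "y = snd d (p (g x))" using lift by (auto simp: S'_def)
      then show "y \<in> (snd d \<circ> p) ` V" by (auto simp: S'_def)
    qed
    ultimately have "(k \<circ> (snd d \<circ> psi)) holomorphic_on S'"
      using k(1) holomorphic_on_compose_gen by blast
    moreover have "(k \<circ> (snd d \<circ> psi)) y = g y" if "y \<in> S'" for y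
      using that lift[of y] k(2)[of "g y"] by (simp add: S'_def)
    ultimately have hol: "g holomorphic_on S'"
      using holomorphic_transform by blast
    have "w \<in> S'" using w V(2) by (simp add: S'_def)
    then obtain e where "e > 0" "ball w e \<subseteq> S'"
      using \<open>open S'\<close> open_contains_ball by blast
    with hol show ?thesis using holomorphic_on_subset by blast
  qed
  then have "g analytic_on S" by (simp add: analytic_on_def)
  then show ?thesis by (rule analytic_imp_holomorphic)
qed

lemma holomorphic_lipschitz_half_ball:
  assumes g: "g holomorphic_on ball c R" and bound: "\<And>y. y \<in> ball c R \<Longrightarrow> norm (g y) \<le> 1"
    and x: "x \<in> ball c (R/2)" and y: "y \<in> ball c (R/2)"
  shows "norm (g x - g y) \<le> 4/R * norm (x - y)"
proof (rule field_differentiable_bound[OF convex_ball _ _ x y])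
  fix z assume z: "z \<in> ball c (R/2)"
  then have R: "R > 0" using zero_le_dist[of c z] unfolding mem_ball by linarith
  have "z \<in> ball c R" using z R by simp
  then show "(g has_field_derivative deriv g z) (at z within ball c (R/2))"
    by (rule holomorphic_derivI[OF g open_ball])
  have sub: "cball z (R/4) \<subseteq> ball c R"
  proof
    fix t assume "t \<in> cball z (R/4)"
    then show "t \<in> ball c R"
      using z R dist_triangle[of c t z] unfolding mem_cball mem_ball by linarith
  qed
  have "norm ((deriv ^^ 1) g z) \<le> fact 1 * 1 / (R/4)^1"
  proof (rule Cauchy_inequality)
    show "g holomorphic_on ball z (R/4)" "continuous_on (cball z (R/4)) g"
      using g sub holomorphic_on_subset holomorphic_on_imp_continuous_on ball_subset_cball
      by (blast, meson continuous_on_subset)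
    show "\<And>t. norm (z - t) = R/4 \<Longrightarrow> norm (g t) \<le> 1"
      using sub bound by (auto simp: dist_norm)
  qed (use R in simp)
  then show "norm (deriv g z) \<le> 4/R" by simp
qed

lemma periodic_shift_int:
  fixes g :: "complex \<Rightarrow> 'b"
  assumes per: "\<And>w. exp w \<in> V \<Longrightarrow> g (w + 2*pi*\<i>) = g w" and w: "exp w \<in> V"
  shows "g (w + of_int n * (2*pi*\<i>)) = g w"
proof (induction n rule: int_induct[where k=0])
  case (step1 i)
  have "exp (w + of_int i * (2*pi*\<i>)) = exp w"
    using exp_plus_2pin[of w i] by (simp add: mult_ac)
  then show ?case
    using per[of "w + of_int i * (2*pi*\<i>)"] step1 w by (simp add: algebra_simps)
next
  case (step2 i)
  have "exp (w + of_int (i - 1) * (2*pi*\<i>)) = exp w"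
    using exp_plus_2pin[of w "i - 1"] by (simp add: mult_ac)
  then show ?case
    using per[of "w + of_int (i - 1) * (2*pi*\<i>)"] step2 w by (simp add: algebra_simps)
qed simp

lemma periodic_factors_through_Ln:
  fixes g :: "complex \<Rightarrow> 'b::topological_space"
  assumes g: "continuous_on (exp -` V) g" and V: "0 \<notin> V"
    and per: "\<And>w. exp w \<in> V \<Longrightarrow> g (w + 2*pi*\<i>) = g w"
  shows "continuous_on V (g \<circ> Ln)" and "\<And>w. exp w \<in> V \<Longrightarrow> g (Ln (exp w)) = g w"
proof -
  show factor: "g (Ln (exp w)) = g w" if w: "exp w \<in> V" for w
  proof -
    obtain n :: int where "w = Ln (exp w) + of_int (2 * n) * pi * \<i>"
      using exp_eq[of w "Ln (exp w)"] by auto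
    then have "w = Ln (exp w) + of_int n * (2*pi*\<i>)" by (simp add: mult_ac)
    then show ?thesis
      using periodic_shift_int[of V g "Ln (exp w)" n] per w by simp
  qed
  show "continuous_on V (g \<circ> Ln)"
    unfolding continuous_on_eq_continuous_within
  proof
    fix z assume z: "z \<in> V"
    then have "z \<noteq> 0" using V by blast
    (* A branch of the logarithm that is continuous at z even when z is a negative real. *)
    define L where "L y = Ln (y / z) + Ln z" for y
    have expL: "exp (L y) = y" if "y \<in> V" for y
    proof -
      have "y \<noteq> 0" using that V by blast
      then show ?thesis using \<open>z \<noteq> 0\<close> by (simp add: L_def exp_add)
    qed
    then have LV: "L ` V \<subseteq> exp -` V" by auto
    have "isCont L z"
      unfolding L_def using \<open>z \<noteq> 0\<close> by (intro continuous_intros isCont_Ln') auto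
    then have "continuous (at z within V) L"
      by (rule continuous_at_imp_continuous_at_within)
    moreover have "continuous (at (L z) within exp -` V) g"
      using g z \<open>z \<noteq> 0\<close> by (simp add: continuous_on_eq_continuous_within L_def)
    then have "continuous (at (L z) within L ` V) g"
      by (rule continuous_within_subset[OF _ LV])
    ultimately have "continuous (at z within V) (g \<circ> L)"
      unfolding comp_def by (rule continuous_within_compose2)
    then show "continuous (at z within V) (g \<circ> Ln)"
    proof (rule continuous_transform_within[where \<delta>=1])
      fix y assume "y \<in> V"
      then show "(g \<circ> L) y = (g \<circ> Ln) y"
        using factor[of "L y"] expL[of y] by simp
    qed (use z in auto)
  qed
qed

lemma holomorphic_extend_bounded_removable:
  assumes S: "open S" "\<xi> \<in> S" and h: "h holomorphic_on S - {\<xi>}"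
    and bound: "\<And>w. w \<in> S - {\<xi>} \<Longrightarrow> norm (h w) \<le> B"
  obtains H where "H holomorphic_on S" "\<And>w. w \<in> S - {\<xi>} \<Longrightarrow> H w = h w"
    "\<And>w. w \<in> S \<Longrightarrow> norm (H w) \<le> B"
proof -
  have "eventually (\<lambda>w. norm (h w) \<le> B) (at \<xi>)"
    using S bound eventually_at_in_open by (fastforce elim!: eventually_mono)
  then obtain H where H: "H holomorphic_on S" and Hh: "\<And>w. w \<in> S - {\<xi>} \<Longrightarrow> H w = h w"
    using holomorphic_on_extend_bounded[OF h] S interior_open by blast
  have "(H \<longlongrightarrow> H \<xi>) (at \<xi>)"
    using H S holomorphic_on_imp_continuous_on continuous_on_eq_continuous_at isCont_def by blast
  moreover have "eventually (\<lambda>w. norm (H w) \<le> B) (at \<xi>)"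
    using S bound Hh eventually_at_in_open by (fastforce elim!: eventually_mono)
  ultimately have "norm (H \<xi>) \<le> B"
    using Lim_norm_ubound by (metis at_neq_bot)
  then show thesis
    using that[OF H Hh] bound Hh by (metis Diff_iff empty_iff insert_iff)
qed

lemma exp_vimage_punctured_disc: "exp -` (ball 0 1 - {0}) = {w. Re w < 0}"
  by (auto simp: norm_exp_eq_Re)

lemma covering_map_onto_lift_periodic:
  fixes U :: "'b::real_normed_vector set"
  assumes cov: "covering_map_onto D p X" and U: "connected U" "\<And>w. w \<in> U \<Longrightarrow> w + c \<in> U"
    and g: "continuous_on U g" "g ` U \<subseteq> D"
    and per: "\<And>w. w \<in> U \<Longrightarrow> p (g (w + c)) = p (g w)"
    and w0: "w0 \<in> U" "g (w0 + c) = g w0" and w: "w \<in> U"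
  shows "g (w + c) = g w"
proof (rule covering_map_onto_lift_unique[where ?g1.0="\<lambda>w. g (w + c)", OF cov U(1) _ _ g per w0 w])
  show "continuous_on U (\<lambda>w. g (w + c))"
    using U(2) by (intro continuous_on_compose2[OF g(1)] continuous_intros) auto
  show "(\<lambda>w. g (w + c)) ` U \<subseteq> D" using U(2) g(2) by auto
qed

lemma holo_covering_lift_exp:
  assumes rs: "riemann_surface X A" and p: "holo_map D X A p"
    and cov: "covering_map_onto D p X" and D: "open D"
    and f: "holo_map (ball 0 1 - {0}) X A f"
    and w0: "Re w0 < 0" and b: "b \<in> D" "p b = f (exp w0)"
  obtains g where "g holomorphic_on {w. Re w < 0}" "g ` {w. Re w < 0} \<subseteq> D" "g w0 = b"
    "\<And>w. Re w < 0 \<Longrightarrow> p (g w) = f (exp w)"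
proof -
  let ?H = "{w::complex. Re w < 0}"
  have psi: "holo_map ?H X A (f \<circ> exp)"
    by (rule holo_map_compose[OF f]) (auto simp: norm_exp_eq_Re intro: holomorphic_intros)
  then have "continuous_map (top_of_set ?H) X (f \<circ> exp)" by (simp add: holo_map_def)
  moreover have "simply_connected ?H"
    by (rule convex_imp_simply_connected[OF convex_halfspace_Re_lt])
  moreover have "locally path_connected ?H"
    by (rule locally_open_subset[OF locally_path_connected_UNIV]) (simp add: open_halfspace_Re_lt)
  moreover have "p b = (f \<circ> exp) w0" using b by simp
  ultimately obtain g where g: "continuous_on ?H g" "g ` ?H \<subseteq> D" "g w0 = b"
    and lift: "\<And>w. w \<in> ?H \<Longrightarrow> p (g w) = (f \<circ> exp) w"
    using covering_map_onto_lift[OF cov _ _ _ _ b(1)] w0 by blast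
  have "g holomorphic_on ?H"
    by (rule holomorphic_lift[OF rs p cov D open_halfspace_Re_lt psi g(1,2) lift])
  then show thesis
    using that g lift by simp
qed

lemma holomorphic_half_plane_shift_bound:
  assumes g: "g holomorphic_on {w. Re w < 0}" "g ` {w. Re w < 0} \<subseteq> ball 0 1"
    and w: "2*pi < - Re w"
  shows "norm (g (w + 2*pi*\<i>) - g w) \<le> 8*pi / - Re w"
proof -
  define R where "R = - Re w"
  define c where "c = w + pi * \<i>"
  have "ball c R \<subseteq> {w. Re w < 0}"
  proof
    fix t assume "t \<in> ball c R"
    then have "Re (t - c) < R"
      using complex_Re_le_cmod[of "t - c"] by (simp add: dist_norm norm_minus_commute)
    then show "t \<in> {w. Re w < 0}" by (simp add: c_def R_def)
  qed
  then have gc: "g holomorphic_on ball c R" "\<And>y. y \<in> ball c R \<Longrightarrow> norm (g y) \<le> 1"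
    using g holomorphic_on_subset by (blast, force)
  have "w + 2*pi*\<i> \<in> ball c (R/2)" "w \<in> ball c (R/2)"
    using w by (simp_all add: c_def R_def dist_norm norm_mult)
  then have "norm (g (w + 2*pi*\<i>) - g w) \<le> 4/R * norm (2*pi*\<i>)"
    using holomorphic_lipschitz_half_ball[OF gc] by (metis add_diff_cancel_left')
  then show ?thesis by (simp add: norm_mult R_def)
qed

lemma holo_covering_lift_exp_periodic:
  assumes rs: "riemann_surface X A" and p: "holo_map (ball 0 1) X A p"
    and cov: "covering_map_onto (ball 0 1) p X"
    and f: "holo_map (ball 0 1 - {0}) X A f"
    and z: "z \<in> ball 0 1 - {0}" "2*pi < - ln (norm z)" "16*pi < e * - ln (norm z)"
    and inj: "inj_on p (ball \<zeta> e)" and a: "dist a \<zeta> < e/2" "a \<in> ball 0 1" "p a = f z"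
  obtains g where "g holomorphic_on {w. Re w < 0}" "g ` {w. Re w < 0} \<subseteq> ball 0 1"
    "g (Ln z) = a" "\<And>w. Re w < 0 \<Longrightarrow> p (g w) = f (exp w)"
    "\<And>w. Re w < 0 \<Longrightarrow> g (w + 2*pi*\<i>) = g w"
proof -
  let ?H = "{w::complex. Re w < 0}"
  have ReLn: "Re (Ln z) = ln (norm z)" using z by simp
  then have "Re (Ln z) < 0" using z(2) pi_gt_zero by linarith
  moreover have "p a = f (exp (Ln z))" using z a by simp
  ultimately obtain g where g: "g holomorphic_on ?H" "g ` ?H \<subseteq> ball 0 1" "g (Ln z) = a"
    and lift: "\<And>w. Re w < 0 \<Longrightarrow> p (g w) = f (exp w)"
    using holo_covering_lift_exp[OF rs p cov open_ball f _ a(2)] by blast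
  have exp_shift: "exp (w + 2*pi*\<i>) = exp w" for w
    using exp_plus_2pin[of w 1] by (simp add: algebra_simps)
  (* The lift moves by less than e/2 under the translation by 2 pi i, so injectivity of p
     near \<zeta> forces it to fix the base point. *)
  have "norm (g (Ln z + 2*pi*\<i>) - a) \<le> 8*pi / - ln (norm z)"
    using holomorphic_half_plane_shift_bound[OF g(1,2), of "Ln z"] z(2) ReLn g(3) by simp
  also have "\<dots> < e/2"
  proof -
    have "- ln (norm z) > 0" using z(2) pi_gt_zero by linarith
    then show ?thesis using z(3) by (simp only: pos_divide_less_eq)
  qed
  finally have "dist (g (Ln z + 2*pi*\<i>)) a < e/2" by (simp add: dist_norm)
  then have near: "g (Ln z + 2*pi*\<i>) \<in> ball \<zeta> e"
    using a(1) dist_triangle[of \<zeta> "g (Ln z + 2*pi*\<i>)" a] by (simp add: dist_commute)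
  have "Re (Ln z + 2*pi*\<i>) < 0" using \<open>Re (Ln z) < 0\<close> by simp
  then have "p (g (Ln z + 2*pi*\<i>)) = f (exp (Ln z + 2*pi*\<i>))" by (rule lift)
  also have "\<dots> = p a" using z a by (simp only: exp_shift) simp
  finally have same_fibre: "p (g (Ln z + 2*pi*\<i>)) = p a" .
  have "dist a \<zeta> < e" using a(1) zero_le_dist[of a \<zeta>] by linarith
  then have "a \<in> ball \<zeta> e" by (simp add: dist_commute)
  then have base: "g (Ln z + 2*pi*\<i>) = g (Ln z)"
    using inj_onD[OF inj same_fibre near] g(3) by simp
  have "g (w + 2*pi*\<i>) = g w" if "Re w < 0" for w
  proof (rule covering_map_onto_lift_periodic[OF cov _ _ holomorphic_on_imp_continuous_on[OF g(1)] g(2)])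
    show "connected ?H" by (rule convex_connected[OF convex_halfspace_Re_lt])
    show "p (g (w + 2*pi*\<i>)) = p (g w)" if "w \<in> ?H" for w
      using that lift[of w] lift[of "w + 2*pi*\<i>"] by (simp only: exp_shift) simp
  qed (use \<open>Re (Ln z) < 0\<close> base that in auto)
  then show thesis
    using that g lift by blast
qed

lemma holo_covering_extend_punctured_disc:
  assumes rs: "riemann_surface X A" and p: "holo_map (ball 0 1) X A p"
    and cov: "covering_map_onto (ball 0 1) p X"
    and f: "holo_map (ball 0 1 - {0}) X A f"
    and z: "z \<in> ball 0 1 - {0}" "norm z < 1/2" "2*pi < - ln (norm z)" "16*pi < e * - ln (norm z)"
    and inj: "inj_on p (ball \<zeta> e)" and a: "dist a \<zeta> < e/2" "a \<in> ball 0 1" "p a = f z"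
  obtains H where "H holomorphic_on ball 0 1"
    "\<And>w. w \<in> ball 0 1 - {0} \<Longrightarrow> H w \<in> ball 0 1 \<and> p (H w) = f w" "dist (H 0) a \<le> 4 * norm z"
proof -
  let ?P = "ball (0::complex) 1 - {0}"
  obtain g where g: "g holomorphic_on {w. Re w < 0}" "g ` {w. Re w < 0} \<subseteq> ball 0 1"
    "g (Ln z) = a" and lift: "\<And>w. Re w < 0 \<Longrightarrow> p (g w) = f (exp w)"
    and per: "\<And>w. Re w < 0 \<Longrightarrow> g (w + 2*pi*\<i>) = g w"
    using holo_covering_lift_exp_periodic[OF rs p cov f z(1,3,4) inj a] by blast
  have "continuous_on (exp -` ?P) g"
    using holomorphic_on_imp_continuous_on[OF g(1)] by (simp add: exp_vimage_punctured_disc)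
  moreover have "exp w \<in> ?P \<Longrightarrow> g (w + 2*pi*\<i>) = g w" for w
    using per by (simp add: norm_exp_eq_Re)
  ultimately have cont: "continuous_on ?P (g \<circ> Ln)"
    using periodic_factors_through_Ln(1)[of ?P g] by blast
  have ReLn: "Re (Ln w) < 0" if "w \<in> ?P" for w
    using that by simp
  have into: "(g \<circ> Ln) w \<in> ball 0 1" and lift': "p ((g \<circ> Ln) w) = f w" if "w \<in> ?P" for w
    using g(2) lift[OF ReLn[OF that]] ReLn[OF that] that by (auto simp: image_subset_iff)
  have "open ?P" by blast
  moreover have "(g \<circ> Ln) ` ?P \<subseteq> ball 0 1" using into by blast
  ultimately have "(g \<circ> Ln) holomorphic_on ?P"
    using holomorphic_lift[OF rs p cov open_ball _ f cont _ lift'] by blast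
  then obtain H where H: "H holomorphic_on ball 0 1" and Hh: "\<And>w. w \<in> ?P \<Longrightarrow> H w = g (Ln w)"
    and bound: "\<And>w. w \<in> ball 0 1 \<Longrightarrow> norm (H w) \<le> 1"
    by (rule holomorphic_extend_bounded_removable[OF open_ball centre_in_ball[THEN iffD2, OF zero_less_one]])
       (use into in \<open>auto simp: dist_norm less_imp_le\<close>)
  have "norm (H 0 - H z) \<le> 4/1 * norm (0 - z)"
    by (rule holomorphic_lipschitz_half_ball[OF H bound]) (use z in auto)
  then have "dist (H 0) a \<le> 4 * norm z"
    using Hh[OF z(1)] g(3) by (simp add: dist_norm)
  then show thesis
    using that[OF H] Hh into lift' by simp
qed

lemma covering_map_onto_lift_limit:
  assumes cov: "covering_map_onto D p X" and D: "open D"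
    and lim: "limitin X x z0 sequentially"
  obtains \<zeta> e a where "\<zeta> \<in> D" "p \<zeta> = z0" "e > 0" "ball \<zeta> e \<subseteq> D" "inj_on p (ball \<zeta> e)"
    "a \<longlonglongrightarrow> \<zeta>" "\<forall>\<^sub>F j in sequentially. a j \<in> D \<and> p (a j) = x j"
proof -
  have z0: "z0 \<in> topspace X" using lim by (rule limitin_topspace)
  obtain T v where "z0 \<in> T" "openin X T" and Uv: "\<Union>v = D \<inter> p -` T"
    and opv: "\<forall>u\<in>v. openin (top_of_set D) u"
    and hm: "\<forall>u\<in>v. homeomorphic_map (top_of_set u) (subtopology X T) p"
    using cov z0 unfolding covering_map_onto_def by metis
  have "z0 \<in> p ` D" using cov z0 by (simp add: covering_map_onto_def)
  then obtain \<zeta> where \<zeta>: "\<zeta> \<in> D" "p \<zeta> = z0" by blast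
  then obtain u where u: "u \<in> v" "\<zeta> \<in> u" using Uv \<open>z0 \<in> T\<close> by blast
  have "open u" using opv u D openin_open_trans by blast
  have "u \<subseteq> D" using Uv u by blast
  obtain q where q: "homeomorphic_maps (top_of_set u) (subtopology X T) p q"
    using hm u homeomorphic_map_maps by blast
  have T: "topspace (subtopology X T) = T" using openin_subset[OF \<open>openin X T\<close>] by auto
  have cq: "continuous_map (subtopology X T) (top_of_set u) q"
    and qp: "\<And>y. y \<in> u \<Longrightarrow> q (p y) = y" and pq: "\<And>t. t \<in> T \<Longrightarrow> p (q t) = t"
    using q T by (auto simp: homeomorphic_maps_def)
  obtain e where e: "e > 0" "ball \<zeta> e \<subseteq> u" using \<open>open u\<close> u open_contains_ball by blast
  have "inj_on p u" using qp by (rule inj_on_inverseI)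
  then have "inj_on p (ball \<zeta> e)" using e(2) by (rule inj_on_subset)
  have evT: "\<forall>\<^sub>F j in sequentially. x j \<in> T" using lim \<open>z0 \<in> T\<close> \<open>openin X T\<close> by (simp add: limitin_def)
  then have "limitin (subtopology X T) x z0 sequentially"
    using lim \<open>z0 \<in> T\<close> by (simp add: limitin_subtopology)
  then have "limitin (top_of_set u) (q \<circ> x) (q z0) sequentially"
    by (rule continuous_map_limit[OF cq])
  moreover have "q z0 = \<zeta>" using qp u \<zeta> by metis
  ultimately have "(q \<circ> x) \<longlonglongrightarrow> \<zeta>" by (simp add: limitin_subtopology)
  moreover have "\<forall>\<^sub>F j in sequentially. (q \<circ> x) j \<in> D \<and> p ((q \<circ> x) j) = x j"
  proof (rule eventually_mono[OF evT])
    fix j assume "x j \<in> T"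
    then have "q (x j) \<in> u" using cq T by (auto simp: continuous_map_def)
    then show "(q \<circ> x) j \<in> D \<and> p ((q \<circ> x) j) = x j"
      using \<open>x j \<in> T\<close> \<open>u \<subseteq> D\<close> pq by auto
  qed
  moreover have "ball \<zeta> e \<subseteq> D" using e(2) \<open>u \<subseteq> D\<close> by blast
  ultimately show thesis
    using that[OF \<zeta> e(1)] \<open>inj_on p (ball \<zeta> e)\<close> by blast
qed

lemma eventually_neg_ln_norm_gt:
  fixes z :: "nat \<Rightarrow> 'a::real_normed_vector"
  assumes "z \<longlonglongrightarrow> 0" "\<And>j. z j \<noteq> 0"
  shows "\<forall>\<^sub>F j in sequentially. M < - ln (norm (z j))"
proof -
  have "\<forall>\<^sub>F j in sequentially. norm (z j) < exp (- M)"
    using assms(1) by (simp add: tendsto_iff)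
  then show ?thesis
  proof (rule eventually_mono)
    fix j assume "norm (z j) < exp (- M)"
    then have "ln (norm (z j)) < ln (exp (- M))"
      using assms(2) by (subst ln_less_cancel_iff) auto
    then show "M < - ln (norm (z j))" by simp
  qed
qed

lemma eventually_holo_covering_extension:
  assumes rs: "riemann_surface X A" and p: "holo_map (ball 0 1) X A p"
    and cov: "covering_map_onto (ball 0 1) p X"
    and f: "\<And>j. holo_map (ball 0 1 - {0}) X A (f j)"
    and z: "\<And>j. z j \<in> ball 0 1 - {0}" "z \<longlonglongrightarrow> 0"
    and e: "e > 0" "inj_on p (ball \<zeta> e)"
    and a: "a \<longlonglongrightarrow> \<zeta>" "\<forall>\<^sub>F j in sequentially. a j \<in> ball 0 1 \<and> p (a j) = f j (z j)"
  shows "\<forall>\<^sub>F j in sequentially. \<exists>H. H holomorphic_on ball 0 1 \<and>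
      (\<forall>w\<in>ball 0 1 - {0}. H w \<in> ball 0 1 \<and> p (H w) = f j w) \<and> dist (H 0) (a j) \<le> 4 * norm (z j)"
proof -
  have z0: "z j \<noteq> 0" for j using z(1) by blast
  have "\<forall>\<^sub>F j in sequentially. norm (z j) < 1/2"
    using tendstoD[OF z(2), of "1/2"] by simp
  moreover have "\<forall>\<^sub>F j in sequentially. dist (a j) \<zeta> < e/2"
    using tendstoD[OF a(1), of "e/2"] e(1) by simp
  ultimately show ?thesis
    using a(2) eventually_neg_ln_norm_gt[OF z(2) z0, of "2*pi"]
      eventually_neg_ln_norm_gt[OF z(2) z0, of "16*pi/e"]
  proof eventually_elim
    case (elim j)
    then have "16*pi < e * - ln (norm (z j))" using e(1) by (simp add: field_simps)
    with elim obtain H where "H holomorphic_on ball 0 1"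
      "\<And>w. w \<in> ball 0 1 - {0} \<Longrightarrow> H w \<in> ball 0 1 \<and> p (H w) = f j w"
      "dist (H 0) (a j) \<le> 4 * norm (z j)"
      using holo_covering_extend_punctured_disc[OF rs p cov f z(1), of j e \<zeta> "a j"] e(2) by blast
    then show ?case by blast
  qed
qed

lemma holo_covering_punctured_extensions:
  assumes rs: "riemann_surface X A" and p: "holo_map (ball 0 1) X A p"
    and cov: "covering_map_onto (ball 0 1) p X"
    and f: "\<And>j. holo_map (ball 0 1 - {0}) X A (f j)"
    and z: "\<And>j. z j \<in> ball 0 1 - {0}" "z \<longlonglongrightarrow> 0"
    and lim: "limitin X (\<lambda>j. f j (z j)) z0 sequentially"
  obtains \<zeta> H where "\<zeta> \<in> ball 0 1" "p \<zeta> = z0" "(\<lambda>j. H j 0) \<longlonglongrightarrow> \<zeta>"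
    "\<forall>\<^sub>F j in sequentially. H j holomorphic_on ball 0 1 \<and> H j ` ball 0 1 \<subseteq> ball 0 1 \<and>
        (\<forall>w\<in>ball 0 1 - {0}. p (H j w) = f j w)"
proof -
  let ?D = "ball (0::complex) 1"
  obtain \<zeta> e a where \<zeta>: "\<zeta> \<in> ?D" "p \<zeta> = z0" and e: "e > 0" "inj_on p (ball \<zeta> e)"
    and a: "a \<longlonglongrightarrow> \<zeta>" "\<forall>\<^sub>F j in sequentially. a j \<in> ?D \<and> p (a j) = f j (z j)"
    using covering_map_onto_lift_limit[OF cov open_ball lim] by blast
  have "\<exists>H. \<forall>\<^sub>F j in sequentially. H j holomorphic_on ?D \<and>
      (\<forall>w\<in>?D - {0}. H j w \<in> ?D \<and> p (H j w) = f j w) \<and> dist (H j 0) (a j) \<le> 4 * norm (z j)"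
    using eventually_holo_covering_extension[OF rs p cov f z e a] by (simp only: eventually_ex)
  then obtain H where ext: "\<forall>\<^sub>F j in sequentially. H j holomorphic_on ?D \<and>
      (\<forall>w\<in>?D - {0}. H j w \<in> ?D \<and> p (H j w) = f j w) \<and> dist (H j 0) (a j) \<le> 4 * norm (z j)"
    by blast
  have "(\<lambda>j. dist (H j 0) \<zeta>) \<longlonglongrightarrow> 0"
  proof (rule real_tendsto_sandwich[where f="\<lambda>_. 0"])
    show "\<forall>\<^sub>F j in sequentially. dist (H j 0) \<zeta> \<le> 4 * norm (z j) + dist (a j) \<zeta>"
      using ext
    proof eventually_elim
      case (elim j)
      then show ?case using dist_triangle[of "H j 0" \<zeta> "a j"] by linarith
    qed
    have "(\<lambda>j. dist (a j) \<zeta>) \<longlonglongrightarrow> 0" using a(1) by (rule tendsto_dist_iff[THEN iffD1])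
    then show "(\<lambda>j. 4 * norm (z j) + dist (a j) \<zeta>) \<longlonglongrightarrow> 0"
      by (intro tendsto_add_zero tendsto_mult_right_zero tendsto_norm_zero z(2))
  qed simp_all
  then have H0: "(\<lambda>j. H j 0) \<longlonglongrightarrow> \<zeta>" by (rule tendsto_dist_iff[THEN iffD2])
  then have "\<forall>\<^sub>F j in sequentially. H j 0 \<in> ?D"
    using \<zeta>(1) by (rule topological_tendstoD[OF _ open_ball])
  with ext have "\<forall>\<^sub>F j in sequentially. H j holomorphic_on ?D \<and> H j ` ?D \<subseteq> ?D \<and>
        (\<forall>w\<in>?D - {0}. p (H j w) = f j w)"
  proof eventually_elim
    case (elim j)
    then have "H j w \<in> ?D" if "w \<in> ?D" for w
      using that by (cases "w = 0") auto
    with elim show ?case by blast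
  qed
  with \<zeta> H0 show thesis by (rule that)
qed

lemma limitin_eventually_in_exhaustion:
  assumes lim: "limitin X x l sequentially" and opens: "\<And>j. openin X (Xs j)"
    and mono: "\<And>j. Xs j \<subseteq> Xs (Suc j)" and cover: "(\<Union>j. Xs j) = topspace X"
  shows "\<forall>\<^sub>F j in sequentially. x j \<in> Xs j"
proof -
  obtain k where "l \<in> Xs k" using limitin_topspace[OF lim] cover by blast
  then have "\<forall>\<^sub>F j in sequentially. x j \<in> Xs k"
    using lim opens by (simp add: limitin_def)
  with eventually_ge_at_top[of k] show ?thesis
  proof eventually_elim
    case (elim j)
    then show ?case using lift_Suc_mono_le[of Xs, OF mono] by blast
  qed
qed

lemma holomorphic_image_subset_ball:
  assumes g: "g holomorphic_on S" and S: "open S" "connected S"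
    and bound: "\<And>x. x \<in> S \<Longrightarrow> norm (g x) \<le> 1" and \<xi>: "\<xi> \<in> S" "g \<xi> \<in> ball 0 1"
  shows "g ` S \<subseteq> ball 0 1"
proof (cases "g constant_on S")
  case True
  then show ?thesis
    using \<xi> by (metis constant_on_def image_subsetI)
next
  case False
  then have "open (g ` S)"
    using open_mapping_thm[OF g S S(1) order_refl] by blast
  moreover have "g ` S \<subseteq> cball 0 1" using bound by auto
  ultimately have "g ` S \<subseteq> interior (cball 0 1)" by (metis interior_maximal)
  then show ?thesis by simp
qed

lemma holomorphic_ball_self_maps_subsequence:
  assumes G: "\<And>k. G k holomorphic_on ball 0 1" "\<And>k. G k ` ball 0 1 \<subseteq> ball 0 1"
    and lim0: "(\<lambda>k. G k 0) \<longlonglongrightarrow> \<zeta>" and \<zeta>: "\<zeta> \<in> ball 0 1"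
  obtains r g where "strict_mono r" "g holomorphic_on ball 0 1" "g ` ball 0 1 \<subseteq> ball 0 1"
    "\<And>K. compact K \<Longrightarrow> K \<subseteq> ball 0 1 \<Longrightarrow> uniform_limit K (G \<circ> r) g sequentially"
proof -
  let ?D = "ball (0::complex) 1"
  obtain g r where g: "g holomorphic_on ?D" and r: "strict_mono r"
    and pw: "\<And>x. x \<in> ?D \<Longrightarrow> (\<lambda>n. G (r n) x) \<longlonglongrightarrow> g x"
    and un: "\<And>K. compact K \<Longrightarrow> K \<subseteq> ?D \<Longrightarrow> uniform_limit K (G \<circ> r) g sequentially"
  proof (rule Montel[of ?D "{h. h holomorphic_on ?D \<and> h ` ?D \<subseteq> ?D}" G])
    show "\<exists>B. \<forall>h\<in>{h. h holomorphic_on ?D \<and> h ` ?D \<subseteq> ?D}. \<forall>z\<in>K. norm (h z) \<le> B"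
      if "K \<subseteq> ?D" for K
    proof (intro exI[of _ 1] ballI)
      fix h z assume "h \<in> {h. h holomorphic_on ?D \<and> h ` ?D \<subseteq> ?D}" "z \<in> K"
      then have "h z \<in> ?D" using that by blast
      then show "norm (h z) \<le> 1" by simp
    qed
  qed (use G in \<open>auto simp: image_subset_iff\<close>)
  have "(\<lambda>n. G (r n) 0) \<longlonglongrightarrow> \<zeta>"
    using LIMSEQ_subseq_LIMSEQ[OF lim0 r] by (simp add: o_def)
  moreover have "(\<lambda>n. G (r n) 0) \<longlonglongrightarrow> g 0" by (rule pw) simp
  ultimately have "g 0 = \<zeta>" by (rule LIMSEQ_unique[symmetric])
  moreover have "norm (g x) \<le> 1" if "x \<in> ?D" for x
  proof (rule Lim_norm_ubound[OF _ pw[OF that]])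
    have "norm (G k x) \<le> 1" for k
      using G(2)[of k] that by (auto simp: image_subset_iff less_imp_le)
    then show "\<forall>\<^sub>F n in sequentially. norm (G (r n) x) \<le> 1" by simp
  qed simp
  ultimately have "g ` ?D \<subseteq> ?D"
    using holomorphic_image_subset_ball[OF g open_ball connected_ball, of 0] \<zeta> by simp
  then show thesis by (rule that[OF r g _ un])
qed

lemma conv_on_compacts_comp_uniform_limit:
  assumes p: "continuous_map (top_of_set D) X p" and D: "open D"
    and g: "continuous_on S g" "g ` S \<subseteq> D"
    and un: "\<And>K. compact K \<Longrightarrow> K \<subseteq> S \<Longrightarrow> uniform_limit K G g sequentially"
  shows "conv_on_compacts S X (\<lambda>k. p \<circ> G k) (p \<circ> g)"
  unfolding conv_on_compacts_def
proof (intro allI impI, elim conjE)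
  fix K W assume K: "compact K" "K \<subseteq> S" and W: "openin X W" "(p \<circ> g) ` K \<subseteq> W"
  define V where "V = D \<inter> p -` W"
  have "open V" unfolding V_def by (rule open_vimage_continuous_map[OF p D W(1)])
  moreover have "compact (g ` K)"
    using K g(1) compact_continuous_image continuous_on_subset by blast
  moreover have "g ` K \<subseteq> V" using K W(2) g(2) by (auto simp: V_def)
  ultimately obtain \<epsilon> where \<epsilon>: "\<epsilon> > 0" "(\<Union>x\<in>g ` K. ball x \<epsilon>) \<subseteq> V"
    using compact_subset_open_imp_ball_epsilon_subset by metis
  have "\<forall>\<^sub>F k in sequentially. \<forall>x\<in>K. dist (G k x) (g x) < \<epsilon>"
    using un[OF K] \<epsilon>(1) by (simp add: uniform_limit_iff)
  then show "\<forall>\<^sub>F k in sequentially. (p \<circ> G k) ` K \<subseteq> W"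
  proof (rule eventually_mono)
    fix k assume close: "\<forall>x\<in>K. dist (G k x) (g x) < \<epsilon>"
    have "G k x \<in> V" if "x \<in> K" for x
      using close \<epsilon>(2) that by (force simp: dist_commute)
    then show "(p \<circ> G k) ` K \<subseteq> W" by (auto simp: V_def)
  qed
qed

lemma holo_covering_subsequence_conv_on_compacts:
  assumes p: "continuous_map (top_of_set (ball 0 1)) X p"
    and G: "\<And>k. G k holomorphic_on ball 0 1" "\<And>k. G k ` ball 0 1 \<subseteq> ball 0 1"
    and lim0: "(\<lambda>k. G k 0) \<longlonglongrightarrow> \<zeta>" and \<zeta>: "\<zeta> \<in> ball 0 1"
  obtains r g where "strict_mono r" "g holomorphic_on ball 0 1" "g ` ball 0 1 \<subseteq> ball 0 1"
    "conv_on_compacts (ball 0 1) X (\<lambda>k. p \<circ> G (r k)) (p \<circ> g)"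
proof -
  obtain r :: "nat \<Rightarrow> nat" and g where r: "strict_mono r"
    and g: "g holomorphic_on ball 0 1" "g ` ball 0 1 \<subseteq> ball 0 1"
    and un: "\<And>K. compact K \<Longrightarrow> K \<subseteq> ball 0 1 \<Longrightarrow> uniform_limit K (G \<circ> r) g sequentially"
    using holomorphic_ball_self_maps_subsequence[OF G lim0 \<zeta>] by blast
  have "conv_on_compacts (ball 0 1) X (\<lambda>k. p \<circ> (G \<circ> r) k) (p \<circ> g)"
    by (rule conv_on_compacts_comp_uniform_limit[OF p open_ball
          holomorphic_on_imp_continuous_on[OF g(1)] g(2) un])
  with r g show thesis by (intro that) (simp_all add: o_def)
qed

lemma continuous_map_limitin_tendsto:
  assumes "continuous_map (top_of_set D) X p" "x \<longlonglongrightarrow> \<zeta>" "\<zeta> \<in> D"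
    "\<forall>\<^sub>F j in sequentially. x j \<in> D"
  shows "limitin X (\<lambda>j. p (x j)) (p \<zeta>) sequentially"
proof -
  have "limitin (top_of_set D) x \<zeta> sequentially"
    using assms(2-4) by (simp add: limitin_subtopology)
  then show ?thesis
    using continuous_map_limit[OF assms(1)] by (simp add: o_def)
qed

lemma holo_covering_extensions_into_exhaustion:
  assumes rs: "riemann_surface X A" and p: "holo_map (ball 0 1) X A p"
    and cov: "covering_map_onto (ball 0 1) p X"
    and open_Xs: "\<And>j. openin X (Xs j)" and mono_Xs: "\<And>j. Xs j \<subseteq> Xs (Suc j)"
    and union_Xs: "(\<Union>j. Xs j) = topspace X"
    and f: "\<And>j. holo_map (ball 0 1 - {0}) X A (f j)"
    and f_into: "\<And>j. f j ` (ball 0 1 - {0}) \<subseteq> Xs j"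
    and z: "\<And>j. z j \<in> ball 0 1 - {0}" "z \<longlonglongrightarrow> 0"
    and lim: "limitin X (\<lambda>j. f j (z j)) z0 sequentially"
  obtains \<zeta> N H where "\<zeta> \<in> ball 0 1" "(\<lambda>j. H j 0) \<longlonglongrightarrow> \<zeta>"
    "\<And>j. N \<le> j \<Longrightarrow> H j holomorphic_on ball 0 1 \<and> H j ` ball 0 1 \<subseteq> ball 0 1 \<and>
        holo_map (ball 0 1) X A (p \<circ> H j) \<and> (p \<circ> H j) ` ball 0 1 \<subseteq> Xs j \<and>
        (\<forall>w\<in>ball 0 1 - {0}. p (H j w) = f j w)"
proof -
  let ?D = "ball (0::complex) 1"
  have cp: "continuous_map (top_of_set ?D) X p" using p by (simp add: holo_map_def)
  obtain \<zeta> H where \<zeta>: "\<zeta> \<in> ?D" "p \<zeta> = z0" and H0: "(\<lambda>j. H j 0) \<longlonglongrightarrow> \<zeta>"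
    and ext: "\<forall>\<^sub>F j in sequentially. H j holomorphic_on ?D \<and> H j ` ?D \<subseteq> ?D \<and>
        (\<forall>w\<in>?D - {0}. p (H j w) = f j w)"
    using holo_covering_punctured_extensions[OF rs p cov f z lim] by blast
  have "\<forall>\<^sub>F j in sequentially. H j 0 \<in> ?D"
    using ext by (rule eventually_mono) (auto simp: image_subset_iff)
  then have "limitin X (\<lambda>j. p (H j 0)) z0 sequentially"
    using continuous_map_limitin_tendsto[OF cp H0 \<zeta>(1)] \<zeta>(2) by simp
  then have "\<forall>\<^sub>F j in sequentially. p (H j 0) \<in> Xs j"
    by (rule limitin_eventually_in_exhaustion[OF _ open_Xs mono_Xs union_Xs])
  with ext have "\<forall>\<^sub>F j in sequentially. (H j holomorphic_on ?D \<and> H j ` ?D \<subseteq> ?D \<and>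
        (\<forall>w\<in>?D - {0}. p (H j w) = f j w)) \<and> p (H j 0) \<in> Xs j"
    by (rule eventually_conj)
  then obtain N where N: "\<And>j. N \<le> j \<Longrightarrow> (H j holomorphic_on ?D \<and> H j ` ?D \<subseteq> ?D \<and>
        (\<forall>w\<in>?D - {0}. p (H j w) = f j w)) \<and> p (H j 0) \<in> Xs j"
    unfolding eventually_sequentially by blast
  have into: "(p \<circ> H j) ` ?D \<subseteq> Xs j" if "N \<le> j" for j
  proof
    fix y assume "y \<in> (p \<circ> H j) ` ?D"
    then obtain w where "w \<in> ?D" "y = p (H j w)" by auto
    then show "y \<in> Xs j"
      using N[OF that] f_into[of j] by (cases "w = 0") auto
  qed
  show thesis
  proof (rule that[where N=N and H=H, OF \<zeta>(1) H0])
    fix j assume j: "N \<le> j"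
    from N[OF j] have "H j holomorphic_on ?D" "H j ` ?D \<subseteq> ?D" by simp_all
    then have "holo_map ?D X A (p \<circ> H j)" by (rule holo_map_compose[OF p])
    with N[OF j] into[OF j] show "H j holomorphic_on ?D \<and> H j ` ?D \<subseteq> ?D \<and>
      holo_map ?D X A (p \<circ> H j) \<and> (p \<circ> H j) ` ?D \<subseteq> Xs j \<and> (\<forall>w\<in>?D - {0}. p (H j w) = f j w)"
      by blast
  qed
qed

theorem mainTheorem3:
  fixes X :: "'a topology" and A :: "('a set \<times> ('a \<Rightarrow> complex)) set"
    and Xs :: "nat \<Rightarrow> 'a set" and f :: "nat \<Rightarrow> complex \<Rightarrow> 'a"
    and z :: "nat \<Rightarrow> complex" and z0 :: 'a
  assumes hyp: "hyperbolic_rs X A"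
    and open_Xs: "\<And>j. openin X (Xs j)"
    and mono_Xs: "\<And>j. Xs j \<subseteq> Xs (Suc j)"
    and union_Xs: "(\<Union>j. Xs j) = topspace X"
    and holo_f: "\<And>j. holo_map (ball 0 1 - {0}) X A (f j)"
    and f_into: "\<And>j. f j ` (ball 0 1 - {0}) \<subseteq> Xs j"
    and z_in: "\<And>j. z j \<in> ball 0 1 - {0}"
    and z_lim: "z \<longlonglongrightarrow> 0"
    and z0_in: "z0 \<in> topspace X"
    and f_lim: "limitin X (\<lambda>j. f j (z j)) z0 sequentially"
  shows "\<exists>N Fs. (\<forall>j\<ge>N. holo_map (ball 0 1) X A (Fs j) \<and> Fs j ` ball 0 1 \<subseteq> Xs j \<and>
                   (\<forall>w\<in>ball 0 1 - {0}. Fs j w = f j w))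
            \<and> (\<exists>r F. strict_mono r \<and> (\<forall>k. N \<le> r k) \<and> holo_map (ball 0 1) X A F \<and>
                   conv_on_compacts (ball 0 1) X (\<lambda>k. Fs (r k)) F)"
proof -
  let ?D = "ball (0::complex) 1"
  obtain p where rs: "riemann_surface X A" and p: "holo_map ?D X A p"
    and cov: "covering_map_onto ?D p X"
    using hyp by (auto simp: hyperbolic_rs_def)
  obtain \<zeta> N H where \<zeta>: "\<zeta> \<in> ?D" and H0: "(\<lambda>j. H j 0) \<longlonglongrightarrow> \<zeta>"
    and N: "\<And>j. N \<le> j \<Longrightarrow> H j holomorphic_on ?D \<and> H j ` ?D \<subseteq> ?D \<and>
        holo_map ?D X A (p \<circ> H j) \<and> (p \<circ> H j) ` ?D \<subseteq> Xs j \<and> (\<forall>w\<in>?D - {0}. p (H j w) = f j w)"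
    by (rule holo_covering_extensions_into_exhaustion[OF rs p cov open_Xs mono_Xs union_Xs holo_f f_into
        z_in z_lim f_lim]) blast
  have hol: "\<And>k. H (k + N) holomorphic_on ?D" and img: "\<And>k. H (k + N) ` ?D \<subseteq> ?D"
    using N by simp_all
  have "continuous_map (top_of_set ?D) X p" using p by (simp add: holo_map_def)
  then obtain r :: "nat \<Rightarrow> nat" and g where r: "strict_mono r"
    and g: "g holomorphic_on ?D" "g ` ?D \<subseteq> ?D"
    and conv: "conv_on_compacts ?D X (\<lambda>k. p \<circ> H (r k + N)) (p \<circ> g)"
    using holo_covering_subsequence_conv_on_compacts[OF _ hol img
        LIMSEQ_ignore_initial_segment[OF H0] \<zeta>] by blast
  have "strict_mono (\<lambda>k. r k + N)" using r by (simp add: strict_mono_def)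
  then show ?thesis
    using N conv holo_map_compose[OF p g]
    by (intro exI[of _ N] exI[of _ "\<lambda>j. p \<circ> H j"] conjI exI[of _ "\<lambda>k. r k + N"]) auto
qed

end
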